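(* Let $H$ be a digraph with at least two vertices and $r\in V(H)$ such that every vertex of $H$ is reachable from $r$, and let $(\hat T,\{B_x\}_{x\in V(\hat T)})$ be the $r$-rooted cut decomposition of $H$. For every vertex $u\in V(H)$ and every set $X\subseteq V(H)\setminus(V(\hat T)\cup\{u\})$ there exists a directed path $P$ from $r$ to $u$ in $H$ with $|V(P)\cap X|\le |X|/2$.
   Context: Digraphs are finite and without loops; paths are directed. A vertex $v$ is bi-reachable from $r$ if there are two internally vertex-disjoint directed paths from $r$ to $v$. For a digraph $H$ with at least two vertices and $r\in V(H)$ such that every vertex of $H$ is reachable from $r$, the diblock $B_r$ of $r$ in $H$ is the set of all vertices bi-reachable from $r$, together with $r$ and all out-neighbours of $r$. For $x\in B_r\setminus\{r\}$ let $X_x$ be the set of vertices $v\in V(H)\setminus B_r$ such that every directed $r$–$v$ path intersects $B_r$ for the last time in $x$; $x$ is a bottleneck of $B_r$ if $X_x\ne\emptyset$ (the sets $X_x$ partition $V(H)\setminus B_r$). The $r$-rooted cut decomposition $(\hat T,\{B_x\}_{x\in V(\hat T)})$ of $H$ is defined recursively: $\hat T$ is a rooted tree with root $r$ and $V(\hat T)\subseteq V(H)$; the set associated with the root is $B_r$; the children of $r$ are the bottlenecks of $B_r$; and for each bottleneck $x$, the subtree of $\hat T$ rooted at $x$ together with its associated sets is the $x$-rooted cut decomposition of the induced subgraph $H[X_x\cup\{x\}]$. *)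

theory Defs
  imports Complex_Main
begin

text \<open>A digraph is given by a vertex set V and an edge relation E.
  Paths in the induced subgraph H[S] are nonempty lists of distinct vertices
  of S with consecutive vertices joined by edges of E.\<close>

definition dpath :: "'a set \<Rightarrow> ('a \<Rightarrow> 'a \<Rightarrow> bool) \<Rightarrow> 'a list \<Rightarrow> bool" where
  "dpath S E p \<longleftrightarrow> p \<noteq> [] \<and> distinct p \<and> set p \<subseteq> S \<and>
     (\<forall>i. Suc i < length p \<longrightarrow> E (p ! i) (p ! Suc i))"

definition dpath_from_to :: "'a set \<Rightarrow> ('a \<Rightarrow> 'a \<Rightarrow> bool) \<Rightarrow> 'a \<Rightarrow> 'a \<Rightarrow> 'a list \<Rightarrow> bool" where
  "dpath_from_to S E a b p \<longleftrightarrow> dpath S E p \<and> hd p = a \<and> last p = b"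

definition reachable :: "'a set \<Rightarrow> ('a \<Rightarrow> 'a \<Rightarrow> bool) \<Rightarrow> 'a \<Rightarrow> 'a \<Rightarrow> bool" where
  "reachable S E a b \<longleftrightarrow> (\<exists>p. dpath_from_to S E a b p)"

definition internal_vertices :: "'a list \<Rightarrow> 'a set" where
  "internal_vertices p = set p - {hd p, last p}"

definition bireachable :: "'a set \<Rightarrow> ('a \<Rightarrow> 'a \<Rightarrow> bool) \<Rightarrow> 'a \<Rightarrow> 'a \<Rightarrow> bool" where
  "bireachable S E r v \<longleftrightarrow> (\<exists>p q. p \<noteq> q \<and> dpath_from_to S E r v p \<and> dpath_from_to S E r v q \<and>
       internal_vertices p \<inter> internal_vertices q = {})"

definition diblock :: "'a set \<Rightarrow> ('a \<Rightarrow> 'a \<Rightarrow> bool) \<Rightarrow> 'a \<Rightarrow> 'a set" where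
  "diblock S E r = {v \<in> S. bireachable S E r v} \<union> {r} \<union> {v \<in> S. E r v}"

definition Xset :: "'a set \<Rightarrow> ('a \<Rightarrow> 'a \<Rightarrow> bool) \<Rightarrow> 'a \<Rightarrow> 'a \<Rightarrow> 'a set" where
  "Xset S E r x = {v \<in> S - diblock S E r. \<forall>p. dpath_from_to S E r v p \<longrightarrow>
       last (filter (\<lambda>w. w \<in> diblock S E r) p) = x}"

definition bottleneck :: "'a set \<Rightarrow> ('a \<Rightarrow> 'a \<Rightarrow> bool) \<Rightarrow> 'a \<Rightarrow> 'a \<Rightarrow> bool" where
  "bottleneck S E r x \<longleftrightarrow> x \<in> diblock S E r - {r} \<and> Xset S E r x \<noteq> {}"

text \<open>cut_tree_node E S r v: v is a node of the tree of the r-rooted cut decomposition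
  of H[S].\<close>
inductive cut_tree_node :: "('a \<Rightarrow> 'a \<Rightarrow> bool) \<Rightarrow> 'a set \<Rightarrow> 'a \<Rightarrow> 'a \<Rightarrow> bool" for E where
  root: "cut_tree_node E S r r"
| sub: "bottleneck S E r x \<Longrightarrow> cut_tree_node E (Xset S E r x \<union> {x}) x v \<Longrightarrow> cut_tree_node E S r v"

end

theory Submission
  imports Defs
begin

text \<open>
  Induction along the cut decomposition. If u lies in the diblock B_r, then u = r, or u is an
  out-neighbour of r, or u is reached by two r-u paths with disjoint interiors; since X avoids
  r and u, one of these paths meets at most half of the vertices of X they can use. Otherwise u
  lies in X_x for a bottleneck x: an r-x path never enters X_x, the subtree at x handles
  H[X_x \<union> {x}] by induction, and concatenating the two paths splits the budget |X|.
  That every vertex outside B_r lies in some X_x is where Menger's theorem enters: a vertex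
  that is neither bi-reachable nor an out-neighbour of r is cut off from r by a single vertex,
  and the first such cut vertex on an r-u path already lies in B_r.
\<close>

section \<open>Walks and paths\<close>

lemma walk_contains_path:
  assumes "w \<noteq> []" "successively R w"
  shows "\<exists>p. p \<noteq> [] \<and> distinct p \<and> successively R p \<and> set p \<subseteq> set w \<and>
    hd p = hd w \<and> last p = last w"
  using assms
proof (induction "length w" arbitrary: w rule: less_induct)
  case less
  show ?case
  proof (cases "distinct w")
    case True
    with less.prems show ?thesis by blast
  next
    case False
    then obtain xs ys zs y where w: "w = xs @ [y] @ ys @ [y] @ zs"
      using not_distinct_decomp by blast
    let ?w' = "xs @ [y] @ zs"
    have "successively R ?w'"
      using less.prems(2) unfolding w
      by (auto simp: successively_append_iff successively_Cons split: if_splits)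
    moreover have "length ?w' < length w" "set ?w' \<subseteq> set w" "hd ?w' = hd w" "last ?w' = last w"
      unfolding w by (auto simp: hd_append)
    ultimately show ?thesis
      using less.hyps[of ?w'] by (metis Nil_is_append_conv not_Cons_self2 order_trans)
  qed
qed

lemma set_tl_subset: "set (tl xs) \<subseteq> set xs"
  by (cases xs) auto

lemma successively_mono_butlast:
  assumes "successively R p" "\<And>a b. a \<in> set (butlast p) \<Longrightarrow> R a b \<Longrightarrow> R' a b"
  shows "successively R' p"
  using assms by (induction p rule: induct_list012) (auto split: if_splits)

lemma successively_closed_set:
  assumes "successively R p" "p \<noteq> []" "hd p \<in> T" "\<And>a b. R a b \<Longrightarrow> b \<in> T"
  shows "set p \<subseteq> T"
  using assms by (induction p rule: induct_list012) auto

lemma split_at_last_filter: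
  assumes "\<exists>z\<in>set xs. P z"
  obtains ys zs where "xs = ys @ last (filter P xs) # zs" "P (last (filter P xs))"
    "\<forall>z\<in>set zs. \<not> P z"
proof -
  obtain ys y zs where "xs = ys @ y # zs" "P y" "\<forall>z\<in>set zs. \<not> P z"
    using split_list_last_prop[OF assms] by blast
  moreover from this have "last (filter P xs) = y" by (simp add: filter_empty_conv)
  ultimately show ?thesis using that[of ys zs] by simp
qed

lemma dpath_iff_successively:
  "dpath S E p \<longleftrightarrow> p \<noteq> [] \<and> distinct p \<and> set p \<subseteq> S \<and> successively E p"
  unfolding dpath_def successively_conv_nth by auto

lemma dpath_from_toD:
  assumes "dpath_from_to S E a b p"
  shows "p \<noteq> []" "distinct p" "set p \<subseteq> S" "successively E p" "hd p = a" "last p = b"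
  using assms unfolding dpath_from_to_def dpath_iff_successively by auto

lemma dpath_from_to_transfer:
  "dpath_from_to S E a b p \<Longrightarrow> set p \<subseteq> S' \<Longrightarrow> dpath_from_to S' E a b p"
  unfolding dpath_from_to_def dpath_iff_successively by auto

lemma dpath_from_to_single: "a \<in> S \<Longrightarrow> dpath_from_to S E a a [a]"
  unfolding dpath_from_to_def dpath_iff_successively by auto

lemma dpath_from_to_edge:
  "a \<in> S \<Longrightarrow> b \<in> S \<Longrightarrow> a \<noteq> b \<Longrightarrow> E a b \<Longrightarrow> dpath_from_to S E a b [a, b]"
  unfolding dpath_from_to_def dpath_iff_successively by auto

lemma dpath_from_to_prefix:
  "dpath_from_to S E a b (ys @ z # zs) \<Longrightarrow> dpath_from_to S E a z (ys @ [z])"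
  unfolding dpath_from_to_def dpath_iff_successively
  by (auto simp: successively_append_iff hd_append split: if_splits)

lemma dpath_from_to_suffix:
  "dpath_from_to S E a b (ys @ z # zs) \<Longrightarrow> dpath_from_to S E z b (z # zs)"
  unfolding dpath_from_to_def dpath_iff_successively
  by (auto simp: successively_append_iff successively_Cons split: if_splits)

lemma dpath_from_to_concat:
  assumes p: "dpath_from_to S E a b p" and q: "dpath_from_to S E b c q"
  obtains pq where "dpath_from_to S E a c pq" "set pq \<subseteq> set p \<union> set q"
proof -
  obtain q' where q': "q = b # q'" using dpath_from_toD[OF q] by (cases q) auto
  let ?w = "p @ q'"
  have "?w \<noteq> []" "successively E ?w" "hd ?w = a" "last ?w = c"
    using dpath_from_toD[OF p] dpath_from_toD[OF q] q'
    by (auto simp: successively_append_iff successively_Cons hd_append last_append split: if_splits)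
  then obtain pq where "pq \<noteq> []" "distinct pq" "successively E pq" "set pq \<subseteq> set ?w"
    "hd pq = a" "last pq = c"
    using walk_contains_path by metis
  moreover have "set ?w \<subseteq> set p \<union> set q" "set p \<union> set q \<subseteq> S"
    using q' dpath_from_toD(3)[OF p] dpath_from_toD(3)[OF q] by auto
  ultimately show ?thesis
    using that[of pq] unfolding dpath_from_to_def dpath_iff_successively by blast
qed

lemma internal_vertices_dpath:
  "dpath_from_to S E a b p \<Longrightarrow> internal_vertices p = set p - {a, b}"
  unfolding internal_vertices_def dpath_from_to_def by auto

section \<open>Two disjoint linking paths\<close>

definition ab_path :: "('a \<Rightarrow> 'a \<Rightarrow> bool) \<Rightarrow> 'a set \<Rightarrow> 'a set \<Rightarrow> 'a list \<Rightarrow> bool" where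
  "ab_path R A B p \<longleftrightarrow> p \<noteq> [] \<and> distinct p \<and> successively R p \<and> hd p \<in> A \<and> last p \<in> B"

definition vertex_separable :: "('a \<Rightarrow> 'a \<Rightarrow> bool) \<Rightarrow> 'a set \<Rightarrow> 'a set \<Rightarrow> bool" where
  "vertex_separable R A B \<longleftrightarrow> (\<exists>s. \<forall>p. ab_path R A B p \<longrightarrow> s \<in> set p)"

definition two_linked :: "('a \<Rightarrow> 'a \<Rightarrow> bool) \<Rightarrow> 'a set \<Rightarrow> 'a set \<Rightarrow> bool" where
  "two_linked R A B \<longleftrightarrow> (\<exists>p q. ab_path R A B p \<and> ab_path R A B q \<and> set p \<inter> set q = {})"

lemma ab_path_conversep: "ab_path R\<inverse>\<inverse> A B p \<longleftrightarrow> ab_path R B A (rev p)"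
  by (auto simp: ab_path_def successively_rev hd_rev last_rev)

lemma vertex_separable_conversep: "vertex_separable R\<inverse>\<inverse> B A \<longleftrightarrow> vertex_separable R A B"
  unfolding vertex_separable_def by (metis ab_path_conversep rev_rev_ident set_rev)

lemma two_linked_conversep: "two_linked R\<inverse>\<inverse> B A \<longleftrightarrow> two_linked R A B"
  unfolding two_linked_def by (metis ab_path_conversep rev_rev_ident set_rev)

lemma ab_path_mono: "ab_path R A B p \<Longrightarrow> (\<And>a b. R a b \<Longrightarrow> R' a b) \<Longrightarrow> ab_path R' A B p"
  unfolding ab_path_def using successively_mono by metis

lemma ab_path_truncate:
  assumes "ab_path R A B p" "\<exists>z\<in>set p. z \<in> T"
  obtains p' where "ab_path R A T p'" "set p' \<subseteq> set p" "set (butlast p') \<inter> T = {}"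
proof -
  obtain ys z zs where p: "p = ys @ z # zs" "z \<in> T" "\<forall>a\<in>set ys. a \<notin> T"
    using split_list_first_prop[OF assms(2)] by blast
  have "ab_path R A T (ys @ [z])"
    using assms(1) p unfolding ab_path_def
    by (auto simp: successively_append_iff hd_append split: if_splits)
  then show ?thesis
    using p that[of "ys @ [z]"] by auto
qed

lemma ab_path_join:
  assumes "ab_path R A {m} P" "ab_path R {m} B Q" "set P \<inter> set Q \<subseteq> {m}"
  shows "ab_path R A B (P @ tl Q)"
proof -
  obtain Q' where Q: "Q = m # Q'" using assms(2) unfolding ab_path_def by (cases Q) auto
  have "last P = m" "m \<notin> set Q'" using assms(1,2) Q unfolding ab_path_def by auto
  with assms Q show ?thesis
    unfolding ab_path_def
    by (auto simp: successively_append_iff successively_Cons last_append split: if_splits)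
qed

lemma ab_path_join_edge:
  assumes "ab_path R A {x} P" "ab_path R {y} B Q" "R x y" "set P \<inter> set Q = {}"
  shows "ab_path R A B (P @ Q)"
  using assms unfolding ab_path_def by (auto simp: successively_append_iff)

lemma separator_only_common_vertex:
  assumes sep: "\<forall>p. ab_path R A B p \<longrightarrow> s \<in> set p"
    and P: "ab_path R A B' P" and Q: "ab_path R A' B Q"
    and sP: "s \<in> set P \<Longrightarrow> s = last P" and sQ: "s \<in> set Q \<Longrightarrow> s = hd Q"
  shows "set P \<inter> set Q \<subseteq> {s}"
proof
  fix z assume "z \<in> set P \<inter> set Q"
  then obtain P1 P2 Q1 Q2 where P12: "P = P1 @ z # P2" and Q12: "Q = Q1 @ z # Q2"
    by (metis IntE split_list)
  have "s \<notin> set P1"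
    using P sP unfolding P12 ab_path_def by (cases P2 rule: rev_cases) auto
  moreover have "s \<notin> set Q2"
    using Q sQ unfolding Q12 ab_path_def by (cases Q1) auto
  moreover have "successively R (P1 @ z # Q2)"
    using P Q unfolding ab_path_def P12 Q12
    by (auto simp: successively_append_iff successively_Cons split: if_splits)
  moreover have "hd (P1 @ z # Q2) \<in> A" "last (P1 @ z # Q2) \<in> B"
    using P Q unfolding ab_path_def P12 Q12 by (auto simp: hd_append)
  ultimately have "z = s"
    using walk_contains_path[of "P1 @ z # Q2" R] sep unfolding ab_path_def by fastforce
  then show "z \<in> {s}" by simp
qed

lemma ab_path_meets_target_once:
  assumes "ab_path R A T p" "set (butlast p) \<inter> T = {}"
  shows "set p \<inter> T = {last p}"
proof -
  have "p \<noteq> []" "last p \<in> T" using assms(1) unfolding ab_path_def by auto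
  then have "set p = insert (last p) (set (butlast p))" "last p \<in> T"
    by (metis append_butlast_last_id insert_is_Un set_append set_simps Un_commute)+
  then show ?thesis using assms(2) by auto
qed

lemma ab_paths_to_pair:
  assumes P1: "ab_path R A {s, x} P1" and P2: "ab_path R A {s, x} P2"
    and disj: "set P1 \<inter> set P2 = {}" and "s \<noteq> x"
  obtains Ps Px where "ab_path R A {s} Ps" "ab_path R A {x} Px"
    "set Ps \<inter> set Px = {}" "x \<notin> set Ps" "s \<notin> set Px"
proof -
  have hit: "\<exists>z\<in>set P. z \<in> {s, x}" if "ab_path R A {s, x} P" for P
    using that unfolding ab_path_def by (metis last_in_set)
  obtain P1' where P1': "ab_path R A {s, x} P1'" "set P1' \<subseteq> set P1"
    "set (butlast P1') \<inter> {s, x} = {}"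
    using ab_path_truncate[OF P1 hit[OF P1]] .
  obtain P2' where P2': "ab_path R A {s, x} P2'" "set P2' \<subseteq> set P2"
    "set (butlast P2') \<inter> {s, x} = {}"
    using ab_path_truncate[OF P2 hit[OF P2]] .
  have meet1: "set P1' \<inter> {s, x} = {last P1'}" and meet2: "set P2' \<inter> {s, x} = {last P2'}"
    using ab_path_meets_target_once P1' P2' by blast+
  have disj': "set P1' \<inter> set P2' = {}" using P1'(2) P2'(2) disj by blast
  have "last P1' \<noteq> last P2'" using meet1 meet2 disj' by blast
  moreover have "last P1' \<in> {s, x}" "last P2' \<in> {s, x}" using meet1 meet2 by blast+
  ultimately consider "last P1' = s" "last P2' = x" | "last P1' = x" "last P2' = s"
    by auto
  moreover have target: "ab_path R A {last P} P" if "ab_path R A T P" for P T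
    using that unfolding ab_path_def by simp
  ultimately show ?thesis
  proof cases
    case 1
    with target[OF P1'(1)] target[OF P2'(1)] meet1 meet2 disj' \<open>s \<noteq> x\<close> show ?thesis
      by (intro that[of P1' P2']) auto
  next
    case 2
    with target[OF P1'(1)] target[OF P2'(1)] meet1 meet2 disj' \<open>s \<noteq> x\<close> show ?thesis
      by (intro that[of P2' P1']) auto
  qed
qed

lemma two_paths_to_separator_and_tail:
  assumes IH: "\<And>A' B'. \<not> vertex_separable RF A' B' \<Longrightarrow> two_linked RF A' B'"
    and R: "\<And>a b. R a b \<Longrightarrow> RF a b \<or> a = x"
    and nonsep: "\<not> vertex_separable R A B"
    and hit: "\<And>p. ab_path R A B p \<Longrightarrow> s \<in> set p \<or> x \<in> set p"
    and "s \<noteq> x"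
  obtains Ps Px where "ab_path RF A {s} Ps" "ab_path RF A {x} Px"
    "set Ps \<inter> set Px = {}" "s \<notin> set Px"
proof -
  have "\<not> vertex_separable RF A {s, x}"
    unfolding vertex_separable_def
  proof
    assume "\<exists>t. \<forall>p. ab_path RF A {s, x} p \<longrightarrow> t \<in> set p"
    then obtain t where t: "\<forall>p. ab_path RF A {s, x} p \<longrightarrow> t \<in> set p" ..
    obtain p where p: "ab_path R A B p" "t \<notin> set p"
      using nonsep unfolding vertex_separable_def by blast
    then have "\<exists>z\<in>set p. z \<in> {s, x}" using hit[OF p(1)] by blast
    then obtain p' where p': "ab_path R A {s, x} p'" "set p' \<subseteq> set p"
      "set (butlast p') \<inter> {s, x} = {}"
      using ab_path_truncate[OF p(1)] by metis
    \<comment> \<open>the edge leaving x cannot occur before the end of p'\<close>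
    have "successively RF p'"
    proof (rule successively_mono_butlast)
      show "successively R p'" using p'(1) unfolding ab_path_def by blast
      fix a b assume "a \<in> set (butlast p')" "R a b"
      with p'(3) R show "RF a b" by blast
    qed
    with p'(1) have "ab_path RF A {s, x} p'" unfolding ab_path_def by blast
    with t p'(2) p(2) show False by blast
  qed
  then obtain P1 P2 where "ab_path RF A {s, x} P1" "ab_path RF A {s, x} P2" "set P1 \<inter> set P2 = {}"
    using IH unfolding two_linked_def by blast
  from ab_paths_to_pair[OF this \<open>s \<noteq> x\<close>] that show ?thesis by blast
qed

lemma two_paths_from_separator_and_head:
  assumes IH: "\<And>A' B'. \<not> vertex_separable RF A' B' \<Longrightarrow> two_linked RF A' B'"
    and R: "\<And>a b. R a b \<Longrightarrow> RF a b \<or> b = y"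
    and nonsep: "\<not> vertex_separable R A B"
    and hit: "\<And>p. ab_path R A B p \<Longrightarrow> s \<in> set p \<or> y \<in> set p"
    and "s \<noteq> y"
  obtains Qs Qy where "ab_path RF {s} B Qs" "ab_path RF {y} B Qy"
    "set Qs \<inter> set Qy = {}" "s \<notin> set Qy"
proof -
  obtain Qs Qy where "ab_path RF\<inverse>\<inverse> B {s} Qs" "ab_path RF\<inverse>\<inverse> B {y} Qy"
    "set Qs \<inter> set Qy = {}" "s \<notin> set Qy"
  proof (rule two_paths_to_separator_and_tail[of "RF\<inverse>\<inverse>" "R\<inverse>\<inverse>" y B A s])
    show "two_linked RF\<inverse>\<inverse> A' B'" if "\<not> vertex_separable RF\<inverse>\<inverse> A' B'" for A' B'
      using that IH by (metis two_linked_conversep vertex_separable_conversep conversep_conversep)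
    show "RF\<inverse>\<inverse> a b \<or> a = y" if "R\<inverse>\<inverse> a b" for a b using that R by blast
    show "\<not> vertex_separable R\<inverse>\<inverse> B A" using nonsep by (simp add: vertex_separable_conversep)
    show "s \<in> set p \<or> y \<in> set p" if "ab_path R\<inverse>\<inverse> B A p" for p
      using that hit[of "rev p"] by (auto simp: ab_path_conversep)
  qed (use \<open>s \<noteq> y\<close> in auto)
  then show ?thesis
    using that[of "rev Qs" "rev Qy"] by (simp add: ab_path_conversep)
qed

lemma two_linked_glue:
  assumes "ab_path R A {s} Ps" "ab_path R A {x} Px" "ab_path R {s} B Qs" "ab_path R {y} B Qy"
    and "R x y" and "set Ps \<inter> set Qs \<subseteq> {s}"
    and "set Ps \<inter> set Px = {}" "set Qs \<inter> set Qy = {}" "set Ps \<inter> set Qy = {}"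
      "set Px \<inter> set Qs = {}" "set Px \<inter> set Qy = {}"
  shows "two_linked R A B"
proof -
  have "ab_path R A B (Ps @ tl Qs)" using ab_path_join[OF assms(1,3,6)] .
  moreover have "ab_path R A B (Px @ Qy)" using ab_path_join_edge[OF assms(2,4,5,11)] .
  moreover have "set (Ps @ tl Qs) \<inter> set (Px @ Qy) = {}"
    using assms(7-10) set_tl_subset[of Qs] by auto
  ultimately show ?thesis unfolding two_linked_def by blast
qed

text \<open>Menger's induction on the edges: if the new edge x \<rightarrow> y is needed, a separator s of
  the smaller digraph yields linkages from A to {s, x} and from {s, y} to B, which meet only
  in s and glue along x \<rightarrow> y to two disjoint paths.\<close>

lemma two_linked_add_edge:
  assumes IH: "\<And>A' B'. \<not> vertex_separable RF A' B' \<Longrightarrow> two_linked RF A' B'"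
    and R: "\<And>a b. R a b \<longleftrightarrow> RF a b \<or> (a = x \<and> b = y)"
    and nonsep: "\<not> vertex_separable R A B"
  shows "two_linked R A B"
proof (cases "vertex_separable RF A B")
  case False
  with IH R show ?thesis unfolding two_linked_def by (metis ab_path_mono)
next
  case True
  then obtain s where sep: "\<forall>p. ab_path RF A B p \<longrightarrow> s \<in> set p"
    unfolding vertex_separable_def by blast
  have uses_edge: "x \<in> set p \<and> y \<in> set p" if "ab_path R A B p" "s \<notin> set p" for p
  proof (rule ccontr)
    assume "\<not> (x \<in> set p \<and> y \<in> set p)"
    with that(1) have "ab_path RF A B p"
      unfolding ab_path_def by (auto elim!: successively_mono simp: R)
    with sep that(2) show False by blast
  qed
  obtain p0 where "ab_path R A B p0" "s \<notin> set p0"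
    using nonsep unfolding vertex_separable_def by blast
  then have "s \<noteq> x" "s \<noteq> y" using uses_edge by blast+
  have "RF a b \<or> a = x" "RF a b \<or> b = y" if "R a b" for a b using that R by blast+
  moreover have "s \<in> set p \<or> x \<in> set p" "s \<in> set p \<or> y \<in> set p" if "ab_path R A B p" for p
    using that uses_edge by blast+
  ultimately obtain Ps Px Qs Qy where
    Ps: "ab_path RF A {s} Ps" and Px: "ab_path RF A {x} Px" and Qs: "ab_path RF {s} B Qs"
    and Qy: "ab_path RF {y} B Qy" and disj: "set Ps \<inter> set Px = {}" "set Qs \<inter> set Qy = {}"
    and "s \<notin> set Px" "s \<notin> set Qy"
    using two_paths_to_separator_and_tail[OF IH _ nonsep _ \<open>s \<noteq> x\<close>]
      two_paths_from_separator_and_head[OF IH _ nonsep _ \<open>s \<noteq> y\<close>] by metis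
  have cross: "set Ps \<inter> set Qs \<subseteq> {s}" "set Ps \<inter> set Qy \<subseteq> {s}"
    "set Px \<inter> set Qs \<subseteq> {s}" "set Px \<inter> set Qy \<subseteq> {s}"
    using separator_only_common_vertex[OF sep] Ps Px Qs Qy \<open>s \<notin> set Px\<close> \<open>s \<notin> set Qy\<close>
    unfolding ab_path_def by (metis singletonD)+
  have RF_R: "RF a b \<Longrightarrow> R a b" for a b using R by blast
  show ?thesis
  proof (rule two_linked_glue[OF ab_path_mono[OF Ps RF_R] ab_path_mono[OF Px RF_R]
        ab_path_mono[OF Qs RF_R] ab_path_mono[OF Qy RF_R] _ cross(1) disj])
    show "R x y" using R by blast
    show "set Ps \<inter> set Qy = {}" "set Px \<inter> set Qs = {}" "set Px \<inter> set Qy = {}"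
      using cross(2-4) \<open>s \<notin> set Px\<close> \<open>s \<notin> set Qy\<close> by blast+
  qed
qed

theorem two_linked_if_not_vertex_separable:
  assumes "finite {(a, b). R a b}" and "\<not> vertex_separable R A B"
  shows "two_linked R A B"
proof -
  have "two_linked (\<lambda>a b. (a, b) \<in> Ed) A B"
    if "finite Ed" "\<not> vertex_separable (\<lambda>a b. (a, b) \<in> Ed) A B" for Ed :: "('a \<times> 'a) set"
    using that
  proof (induction Ed arbitrary: A B rule: finite_induct)
    case empty
    have single: "\<exists>a. p = [a]" if "ab_path (\<lambda>a b. (a, b) \<in> {}) A B p" for p
      using that unfolding ab_path_def by (cases p rule: remdups_adj.cases) auto
    obtain p where p: "ab_path (\<lambda>a b. (a, b) \<in> {}) A B p"
      using empty.prems unfolding vertex_separable_def by blast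
    then obtain a where "p = [a]" using single by blast
    obtain q where "ab_path (\<lambda>a b. (a, b) \<in> {}) A B q" "a \<notin> set q"
      using empty.prems unfolding vertex_separable_def by blast
    with p \<open>p = [a]\<close> single show ?case unfolding two_linked_def by fastforce
  next
    case (insert e F)
    obtain x y where "e = (x, y)" by fastforce
    then show ?case by (intro two_linked_add_edge[OF insert.IH _ insert.prems]) auto
  qed
  from this[OF assms(1)] assms(2) show ?thesis by simp
qed

section \<open>Diblocks and bottlenecks\<close>

lemma dpath_interior_ab_path:
  assumes p: "dpath_from_to S E r v p" and "r \<noteq> v" "\<not> E r v"
  obtains m where "p = r # m @ [v]"
    "ab_path (\<lambda>a b. a \<in> S - {r, v} \<and> b \<in> S - {r, v} \<and> E a b)
       {a \<in> S - {r, v}. E r a} {b \<in> S - {r, v}. E b v} m"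
proof -
  note p' = dpath_from_toD[OF p]
  obtain p1 where "p = r # p1" using p' by (cases p) auto
  with p' \<open>r \<noteq> v\<close> obtain m where m: "p = r # m @ [v]"
    by (cases p1 rule: rev_cases) auto
  with p' \<open>\<not> E r v\<close> have "m \<noteq> []" by auto
  moreover have inner: "set m \<subseteq> S - {r, v}" "distinct m" using p' m by auto
  moreover have "successively E m" "E r (hd m)" "E (last m) v"
    using p'(4) m \<open>m \<noteq> []\<close> by (auto simp: successively_append_iff successively_Cons)
  moreover have "successively (\<lambda>a b. a \<in> S - {r, v} \<and> b \<in> S - {r, v} \<and> E a b) m"
    using \<open>successively E m\<close> by (rule successively_mono) (use inner in auto)
  moreover have "hd m \<in> S - {r, v}" "last m \<in> S - {r, v}"
    using inner(1) hd_in_set last_in_set \<open>m \<noteq> []\<close> by blast+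
  ultimately show ?thesis
    using that m unfolding ab_path_def by simp
qed

lemma bireachable_if_no_cut_vertex:
  assumes "finite S" "r \<in> S" "v \<in> S" "r \<noteq> v" "\<not> E r v" "reachable S E r v"
    and no_cut: "\<forall>w\<in>S - {r, v}. \<exists>p. dpath_from_to S E r v p \<and> w \<notin> set p"
  shows "bireachable S E r v"
proof -
  define R where "R = (\<lambda>a b. a \<in> S - {r, v} \<and> b \<in> S - {r, v} \<and> E a b)"
  define A where "A = {a \<in> S - {r, v}. E r a}"
  define B where "B = {b \<in> S - {r, v}. E b v}"
  have "{(a, b). R a b} \<subseteq> S \<times> S" by (auto simp: R_def)
  then have "finite {(a, b). R a b}" using assms(1) finite_subset by blast
  moreover have "\<not> vertex_separable R A B"
    unfolding vertex_separable_def
  proof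
    assume "\<exists>t. \<forall>m. ab_path R A B m \<longrightarrow> t \<in> set m"
    then obtain t where t: "\<forall>m. ab_path R A B m \<longrightarrow> t \<in> set m" ..
    obtain p where p: "dpath_from_to S E r v p" "t \<in> S - {r, v} \<longrightarrow> t \<notin> set p"
      using no_cut \<open>reachable S E r v\<close> unfolding reachable_def by blast
    obtain m where "p = r # m @ [v]" "ab_path R A B m"
      using dpath_interior_ab_path[OF p(1) \<open>r \<noteq> v\<close> \<open>\<not> E r v\<close>] unfolding R_def A_def B_def .
    with p t dpath_from_toD(3)[OF p(1)] dpath_from_toD(2)[OF p(1)] show False by auto
  qed
  ultimately obtain m1 m2 where m: "ab_path R A B m1" "ab_path R A B m2" "set m1 \<inter> set m2 = {}"
    using two_linked_if_not_vertex_separable unfolding two_linked_def by blast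
  have outer: "dpath_from_to S E r v (r # m @ [v])" "internal_vertices (r # m @ [v]) = set m"
    if "ab_path R A B m" for m
  proof -
    have "set m \<subseteq> S - {r, v}"
      using successively_closed_set[of R m "S - {r, v}"] that
      unfolding ab_path_def R_def A_def by auto
    moreover have "successively E (r # m @ [v])"
      using that unfolding ab_path_def R_def A_def B_def
      by (auto simp: successively_append_iff successively_Cons elim: successively_mono)
    ultimately show "dpath_from_to S E r v (r # m @ [v])"
      using that assms(2-4) unfolding ab_path_def dpath_from_to_def dpath_iff_successively by auto
    then show "internal_vertices (r # m @ [v]) = set m"
      using \<open>set m \<subseteq> S - {r, v}\<close> by (auto simp: internal_vertices_dpath)
  qed
  have "r # m1 @ [v] \<noteq> r # m2 @ [v]" using m unfolding ab_path_def by auto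
  with m outer show ?thesis unfolding bireachable_def by metis
qed

lemma diblock_subset: "r \<in> S \<Longrightarrow> diblock S E r \<subseteq> S"
  unfolding diblock_def by auto

lemma root_in_diblock: "r \<in> diblock S E r"
  unfolding diblock_def by auto

lemma Xset_subset: "Xset S E r x \<subseteq> S - diblock S E r"
  unfolding Xset_def by auto

lemma XsetD:
  "v \<in> Xset S E r x \<Longrightarrow> dpath_from_to S E r v p \<Longrightarrow> last (filter (\<lambda>w. w \<in> diblock S E r) p) = x"
  unfolding Xset_def by simp

definition separating_vertices :: "'a set \<Rightarrow> ('a \<Rightarrow> 'a \<Rightarrow> bool) \<Rightarrow> 'a \<Rightarrow> 'a \<Rightarrow> 'a set" where
  "separating_vertices S E r v = {w \<in> S - {r, v}. \<forall>p. dpath_from_to S E r v p \<longrightarrow> w \<in> set p}"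

lemma separating_vertices_nonempty:
  assumes "finite S" "r \<in> S" "v \<in> S" "reachable S E r v" "v \<notin> diblock S E r"
  shows "separating_vertices S E r v \<noteq> {}"
proof
  assume "separating_vertices S E r v = {}"
  then have "\<forall>w\<in>S - {r, v}. \<exists>p. dpath_from_to S E r v p \<and> w \<notin> set p"
    unfolding separating_vertices_def by blast
  moreover have "r \<noteq> v" "\<not> E r v" "\<not> bireachable S E r v"
    using assms(3,5) unfolding diblock_def by auto
  ultimately show False
    using bireachable_if_no_cut_vertex[OF assms(1-3)] assms(4) by blast
qed

lemma separating_vertices_trans:
  assumes x: "x \<in> separating_vertices S E r v" and w: "w \<in> separating_vertices S E r x"
    and "reachable S E r v"
  shows "w \<in> separating_vertices S E r v"
proof -
  have x_on: "x \<in> set p" if "dpath_from_to S E r v p" for p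
    using x that unfolding separating_vertices_def by blast
  have before_x: "w \<in> set ps" if "dpath_from_to S E r v (ps @ x # qs)" for ps qs
    using w dpath_from_to_prefix[OF that] unfolding separating_vertices_def by auto
  obtain p0 where p0: "dpath_from_to S E r v p0"
    using \<open>reachable S E r v\<close> unfolding reachable_def by blast
  then obtain ps qs where p0_split: "p0 = ps @ x # qs" using x_on split_list by metis
  have "w \<in> set ps" using before_x p0 p0_split by blast
  moreover have "v \<in> set (x # qs)"
    using dpath_from_toD(6)[OF p0] p0_split by (metis last_appendR last_in_set list.distinct(1))
  ultimately have "w \<noteq> v" using dpath_from_toD(2)[OF p0] p0_split by auto
  moreover have "w \<in> set p" if "dpath_from_to S E r v p" for p
    using x_on[OF that] before_x that by (metis split_list Un_iff set_append)
  ultimately show ?thesis using w unfolding separating_vertices_def by auto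
qed

lemma diblock_path_avoiding:
  assumes "r \<in> S" "y \<in> diblock S E r" "y \<in> S" "x \<noteq> r" "x \<noteq> y"
  obtains q where "dpath_from_to S E r y q" "x \<notin> set q"
proof -
  consider "y = r" | "y \<noteq> r" "E r y" | "bireachable S E r y"
    using assms(2) unfolding diblock_def by auto
  then show ?thesis
  proof cases
    case 1
    with that[of "[r]"] dpath_from_to_single[OF \<open>r \<in> S\<close>] \<open>x \<noteq> r\<close> show ?thesis by auto
  next
    case 2
    with that[of "[r, y]"] dpath_from_to_edge[OF \<open>r \<in> S\<close> \<open>y \<in> S\<close>] assms(4,5) show ?thesis
      by auto
  next
    case 3
    then obtain q1 q2 where q: "dpath_from_to S E r y q1" "dpath_from_to S E r y q2"
      "internal_vertices q1 \<inter> internal_vertices q2 = {}"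
      unfolding bireachable_def by blast
    then have "x \<notin> set q1 \<or> x \<notin> set q2"
      using assms(4,5) by (auto simp: internal_vertices_dpath)
    with q that show ?thesis by blast
  qed
qed

lemma first_separating_vertex_in_diblock:
  assumes "finite S" "r \<in> S" "\<forall>v\<in>S. reachable S E r v" "v \<in> S" "v \<notin> diblock S E r"
  obtains x where "x \<in> separating_vertices S E r v" "x \<in> diblock S E r"
proof -
  let ?D = "separating_vertices S E r v"
  have reach: "reachable S E r w" if "w \<in> S" for w using assms(3) that by blast
  obtain p0 where p0: "dpath_from_to S E r v p0" using reach[OF assms(4)] unfolding reachable_def ..
  obtain z where "z \<in> ?D"
    using separating_vertices_nonempty[OF assms(1,2,4) reach assms(5)] assms(4) by blast
  with p0 have "\<exists>z\<in>set p0. z \<in> ?D" unfolding separating_vertices_def by blast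
  then obtain ys x zs where p0_split: "p0 = ys @ x # zs" and x: "x \<in> ?D"
    and first: "\<forall>y\<in>set ys. y \<notin> ?D"
    by (rule split_list_first_propE)
  have "x \<in> diblock S E r"
  proof (rule ccontr)
    assume "x \<notin> diblock S E r"
    moreover have "x \<in> S" using x unfolding separating_vertices_def by blast
    ultimately obtain w where w: "w \<in> separating_vertices S E r x"
      using separating_vertices_nonempty[OF assms(1,2) _ reach] by blast
    then have "w \<in> ?D" using separating_vertices_trans[OF x w reach[OF assms(4)]] by blast
    moreover have "w \<in> set (ys @ [x])" "w \<noteq> x"
      using w dpath_from_to_prefix[OF p0[unfolded p0_split]] unfolding separating_vertices_def
      by blast+
    ultimately show False using first by auto
  qed
  with x that show ?thesis by blast
qed

lemma in_Xset_if_separating_diblock_vertex: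
  assumes "r \<in> S" "x \<in> separating_vertices S E r v" "x \<in> diblock S E r"
    "v \<in> S" "v \<notin> diblock S E r"
  shows "v \<in> Xset S E r x"
  unfolding Xset_def
proof (intro CollectI conjI allI impI)
  show "v \<in> S - diblock S E r" using assms(4,5) by blast
  fix p assume p: "dpath_from_to S E r v p"
  have x_sep: "x \<in> set q" if "dpath_from_to S E r v q" for q
    using assms(2) that unfolding separating_vertices_def by blast
  obtain ps qs where p_split: "p = ps @ x # qs" using x_sep[OF p] split_list by metis
  have after_x: "y \<notin> diblock S E r" if "y \<in> set qs" for y
  proof
    assume "y \<in> diblock S E r"
    obtain qs1 qs2 where qs_split: "qs = qs1 @ y # qs2" using \<open>y \<in> set qs\<close> split_list by metis
    have "x \<noteq> y" using dpath_from_toD(2)[OF p] p_split \<open>y \<in> set qs\<close> by auto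
    have "x \<noteq> r" using assms(2) unfolding separating_vertices_def by blast
    have "y \<in> S" using dpath_from_toD(3)[OF p] p_split \<open>y \<in> set qs\<close> by auto
    obtain q where q: "dpath_from_to S E r y q" "x \<notin> set q"
      using diblock_path_avoiding[OF assms(1) \<open>y \<in> diblock S E r\<close> \<open>y \<in> S\<close>
          \<open>x \<noteq> r\<close> \<open>x \<noteq> y\<close>] .
    have tail: "dpath_from_to S E y v (y # qs2)"
      using dpath_from_to_suffix[of S E r v "ps @ x # qs1"] p p_split qs_split by simp
    obtain p' where "dpath_from_to S E r v p'" "set p' \<subseteq> set q \<union> set (y # qs2)"
      using dpath_from_to_concat[OF q(1) tail] .
    moreover have "x \<notin> set (y # qs2)" using dpath_from_toD(2)[OF p] p_split qs_split by auto
    ultimately have "x \<notin> set p'" using q(2) by blast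
    with x_sep \<open>dpath_from_to S E r v p'\<close> show False by blast
  qed
  then have "filter (\<lambda>w. w \<in> diblock S E r) qs = []" by (simp add: filter_empty_conv)
  with assms(3) p_split show "last (filter (\<lambda>w. w \<in> diblock S E r) p) = x" by simp
qed

lemma Xset_cover:
  assumes "finite S" "r \<in> S" "\<forall>v\<in>S. reachable S E r v" "v \<in> S" "v \<notin> diblock S E r"
  obtains x where "bottleneck S E r x" "v \<in> Xset S E r x"
proof -
  obtain x where x: "x \<in> separating_vertices S E r v" "x \<in> diblock S E r"
    using first_separating_vertex_in_diblock[OF assms] .
  then have "v \<in> Xset S E r x"
    using in_Xset_if_separating_diblock_vertex[OF assms(2) _ _ assms(4,5)] by blast
  moreover have "x \<noteq> r" using x(1) unfolding separating_vertices_def by blast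
  ultimately show ?thesis using that x(2) unfolding bottleneck_def by blast
qed

lemma dpath_to_bottleneck_avoids_Xset:
  assumes "dpath_from_to S E r x p"
  shows "set p \<inter> Xset S E r x = {}"
proof (rule ccontr)
  let ?D = "\<lambda>w. w \<in> diblock S E r"
  assume "set p \<inter> Xset S E r x \<noteq> {}"
  then obtain w where w: "w \<in> Xset S E r x" "w \<in> set p" by blast
  obtain ys zs where p_split: "p = ys @ w # zs" using split_list[OF w(2)] by blast
  have "w \<notin> diblock S E r" using w(1) Xset_subset[of S E r x] by blast
  then have "hd p \<noteq> w" using dpath_from_toD(5)[OF assms] root_in_diblock[of r S E] by auto
  then have "hd p \<in> set ys" using p_split by (cases ys) auto
  then have "\<exists>z\<in>set ys. ?D z" using dpath_from_toD(5)[OF assms] root_in_diblock[of r S E] by auto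
  then obtain ys1 ys2 where ys_split: "ys = ys1 @ last (filter ?D ys) # ys2"
    by (rule split_at_last_filter)
  have "last (filter ?D (ys @ [w])) = x"
    using XsetD[OF w(1) dpath_from_to_prefix[OF assms[unfolded p_split]]] .
  with \<open>w \<notin> diblock S E r\<close> have "last (filter ?D ys) = x" by simp
  with ys_split have "x \<in> set ys" by (metis in_set_conv_decomp)
  moreover have "x \<in> set (w # zs)"
    using dpath_from_toD(6)[OF assms] p_split by (metis last_appendR last_in_set list.distinct(1))
  ultimately show False using dpath_from_toD(2)[OF assms] p_split by auto
qed

lemma reachable_within_Xset:
  assumes "finite S" "r \<in> S" "\<forall>v\<in>S. reachable S E r v" and v: "v \<in> Xset S E r x"
  shows "reachable (Xset S E r x \<union> {x}) E x v"
proof -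
  have "v \<in> S" using v Xset_subset[of S E r x] by blast
  then obtain p where p: "dpath_from_to S E r v p" using assms(3) unfolding reachable_def by blast
  have "\<exists>z\<in>set p. z \<in> diblock S E r"
    using dpath_from_toD(1,5)[OF p] root_in_diblock[of r S E] hd_in_set by metis
  then obtain ps qs where p_split: "p = ps @ x # qs" "x \<in> diblock S E r"
    and after_x: "\<forall>z\<in>set qs. z \<notin> diblock S E r"
    using split_at_last_filter XsetD[OF v p] by metis
  have "z \<in> Xset S E r x" if z: "z \<in> set qs" for z
  proof -
    obtain qs1 qs2 where qs_split: "qs = qs1 @ z # qs2" using split_list[OF z] by blast
    have "z \<in> S" "z \<notin> diblock S E r"
      using dpath_from_toD(3)[OF p] p_split z after_x by auto
    then obtain y where y: "z \<in> Xset S E r y"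
      using Xset_cover[OF assms(1-3)] by metis
    have "dpath_from_to S E r z ((ps @ x # qs1) @ [z])"
      using dpath_from_to_prefix[of S E r v "ps @ x # qs1" z qs2] p p_split qs_split by simp
    then have "last (filter (\<lambda>w. w \<in> diblock S E r) ((ps @ x # qs1) @ [z])) = y"
      by (rule XsetD[OF y])
    moreover have "filter (\<lambda>w. w \<in> diblock S E r) qs1 = []"
      using after_x qs_split by (simp add: filter_empty_conv)
    ultimately have "y = x" using p_split(2) \<open>z \<notin> diblock S E r\<close> by simp
    with y show ?thesis by simp
  qed
  then have "set (x # qs) \<subseteq> Xset S E r x \<union> {x}" by auto
  with dpath_from_to_suffix[OF p[unfolded p_split(1)]] show ?thesis
    unfolding reachable_def by (metis dpath_from_to_transfer)
qed

section \<open>Paths through the cut decomposition\<close>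

lemma diblock_path_half:
  assumes "r \<in> S" "u \<in> diblock S E r" "r \<notin> X" "u \<notin> X" "finite Z"
    and paths_in_Z: "\<forall>p. dpath_from_to S E r u p \<longrightarrow> set p \<subseteq> Z"
  obtains p where "dpath_from_to S E r u p" "2 * card (set p \<inter> X) \<le> card (X \<inter> Z)"
proof -
  have "u \<in> S" using diblock_subset[OF assms(1)] assms(2) by blast
  consider "u = r" | "u \<noteq> r" "E r u" | "bireachable S E r u"
    using assms(2) unfolding diblock_def by auto
  then show ?thesis
  proof cases
    case 1
    with that[of "[r]"] dpath_from_to_single[OF \<open>r \<in> S\<close>] \<open>r \<notin> X\<close> show ?thesis by simp
  next
    case 2
    with that[of "[r, u]"] dpath_from_to_edge[OF \<open>r \<in> S\<close> \<open>u \<in> S\<close>] \<open>r \<notin> X\<close> \<open>u \<notin> X\<close>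
    show ?thesis by simp
  next
    case 3
    then obtain p q where pq: "dpath_from_to S E r u p" "dpath_from_to S E r u q"
      "internal_vertices p \<inter> internal_vertices q = {}"
      unfolding bireachable_def by blast
    have "(set p \<inter> X) \<inter> (set q \<inter> X) = {}"
      using pq(3) \<open>r \<notin> X\<close> \<open>u \<notin> X\<close> by (auto simp: internal_vertices_dpath[OF pq(1)]
          internal_vertices_dpath[OF pq(2)])
    then have "card (set p \<inter> X) + card (set q \<inter> X) = card ((set p \<inter> X) \<union> (set q \<inter> X))"
      by (simp add: card_Un_disjoint)
    also have "\<dots> \<le> card (X \<inter> Z)"
      using paths_in_Z pq(1,2) \<open>finite Z\<close> by (intro card_mono) auto
    finally show ?thesis
      using that pq(1,2) by (cases "card (set p \<inter> X) \<le> card (set q \<inter> X)") auto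
  qed
qed

lemma Xset_subinstance:
  assumes "finite S" "r \<in> S" "\<forall>v\<in>S. reachable S E r v" "bottleneck S E r x"
  defines "S' \<equiv> Xset S E r x \<union> {x}"
  shows "S' \<subseteq> S" "card S' < card S" "\<forall>v\<in>S'. reachable S' E x v"
proof -
  have x: "x \<in> diblock S E r" "x \<noteq> r" using assms(4) unfolding bottleneck_def by auto
  show "S' \<subseteq> S" using Xset_subset[of S E r x] diblock_subset[OF assms(2)] x(1)
    unfolding S'_def by blast
  moreover have "r \<notin> S'"
    using Xset_subset[of S E r x] root_in_diblock[of r S E] x(2) unfolding S'_def by blast
  ultimately show "card S' < card S" using assms(1,2) by (intro psubset_card_mono) auto
  have "reachable S' E x x"
    using dpath_from_to_single[of x S'] unfolding reachable_def S'_def by blast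
  with reachable_within_Xset[OF assms(1-3)] show "\<forall>v\<in>S'. reachable S' E x v"
    unfolding S'_def by blast
qed

lemma card_Int_le_add:
  "finite A \<Longrightarrow> finite B \<Longrightarrow> C \<subseteq> A \<union> B \<Longrightarrow> card (C \<inter> X) \<le> card (A \<inter> X) + card (B \<inter> X)"
  by (metis card_Un_le card_mono finite_Int finite_UnI Int_Un_distrib2 Int_mono order_refl le_trans)

lemma cut_decomposition_path_half:
  assumes "finite S" "r \<in> S" "\<forall>v\<in>S. reachable S E r v" "u \<in> S" "u \<notin> X"
    and "\<forall>v. cut_tree_node E S r v \<longrightarrow> v \<notin> X"
  shows "\<exists>p. dpath_from_to S E r u p \<and> 2 * card (set p \<inter> X) \<le> card (X \<inter> S)"
  using assms
proof (induction "card S" arbitrary: S r u rule: less_induct)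
  case less
  have "r \<notin> X" using less.prems(6) cut_tree_node.root[of E S r] by blast
  show ?case
  proof (cases "u \<in> diblock S E r")
    case True
    have "\<forall>p. dpath_from_to S E r u p \<longrightarrow> set p \<subseteq> S" using dpath_from_toD(3)[of S E r u] by blast
    then obtain p where "dpath_from_to S E r u p" "2 * card (set p \<inter> X) \<le> card (X \<inter> S)"
      by (rule diblock_path_half[OF less.prems(2) True \<open>r \<notin> X\<close> less.prems(5) less.prems(1)])
    then show ?thesis by blast
  next
    case False
    then obtain x where x: "bottleneck S E r x" "u \<in> Xset S E r x"
      using Xset_cover[OF less.prems(1-4)] by blast
    define Y where "Y = Xset S E r x"
    have "x \<in> diblock S E r" using x(1) unfolding bottleneck_def by blast
    have "x \<notin> X" using less.prems(6) cut_tree_node.sub[OF x(1) cut_tree_node.root[of E _ x]] by blast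
    have "\<forall>p. dpath_from_to S E r x p \<longrightarrow> set p \<subseteq> S - Y"
      using dpath_to_bottleneck_avoids_Xset[of S E r x] dpath_from_toD(3)[of S E r x]
      unfolding Y_def by blast
    moreover have "finite (S - Y)" using less.prems(1) by blast
    ultimately obtain p1 where p1: "dpath_from_to S E r x p1"
      "2 * card (set p1 \<inter> X) \<le> card (X \<inter> (S - Y))"
      using diblock_path_half[OF less.prems(2) \<open>x \<in> diblock S E r\<close> \<open>r \<notin> X\<close> \<open>x \<notin> X\<close>]
      by blast
    note sub = Xset_subinstance[OF less.prems(1-3) x(1), folded Y_def]
    have "\<forall>v. cut_tree_node E (Y \<union> {x}) x v \<longrightarrow> v \<notin> X"
      using less.prems(6) cut_tree_node.sub[OF x(1)] unfolding Y_def by blast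
    then obtain p2 where p2: "dpath_from_to (Y \<union> {x}) E x u p2"
      "2 * card (set p2 \<inter> X) \<le> card (X \<inter> (Y \<union> {x}))"
      using less.hyps[OF sub(2) finite_subset[OF sub(1) less.prems(1)] _ sub(3) _ less.prems(5)] x(2)
      unfolding Y_def by blast
    obtain p where p: "dpath_from_to S E r u p" "set p \<subseteq> set p1 \<union> set p2"
      using dpath_from_to_concat[OF p1(1) dpath_from_to_transfer[OF p2(1)]]
        dpath_from_toD(3)[OF p2(1)] sub(1) by blast
    have "card (set p \<inter> X) \<le> card (set p1 \<inter> X) + card (set p2 \<inter> X)"
      using card_Int_le_add[OF _ _ p(2)] by simp
    moreover have "card (X \<inter> S) = card (X \<inter> Y) + card (X \<inter> (S - Y))"
      using card_Int_Diff[of "X \<inter> S" Y] less.prems(1) sub(1)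
      by (simp add: Int_assoc Int_absorb1 Int_Diff)
    moreover have "2 * card (set p2 \<inter> X) \<le> card (X \<inter> Y)" using p2(2) \<open>x \<notin> X\<close> by simp
    ultimately show ?thesis using p(1) p1(2) by (intro exI[of _ p]) linarith
  qed
qed

theorem corollary2:
  fixes V :: "'a set" and E :: "'a \<Rightarrow> 'a \<Rightarrow> bool" and r u :: 'a and X :: "'a set"
  assumes "finite V" and "card V \<ge> 2"
    and "\<forall>a b. E a b \<longrightarrow> a \<in> V \<and> b \<in> V"
    and "\<forall>a. \<not> E a a"
    and "r \<in> V"
    and "\<forall>v \<in> V. reachable V E r v"
    and "u \<in> V"
    and "X \<subseteq> V - ({v. cut_tree_node E V r v} \<union> {u})"
  shows "\<exists>p. dpath_from_to V E r u p \<and> real (card (set p \<inter> X)) \<le> real (card X) / 2"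
proof -
  have "u \<notin> X" and "\<forall>v. cut_tree_node E V r v \<longrightarrow> v \<notin> X" and "X \<inter> V = X"
    using assms(8) by auto
  with cut_decomposition_path_half[OF assms(1,5,6,7)] obtain p
    where "dpath_from_to V E r u p" "2 * card (set p \<inter> X) \<le> card X"
    by metis
  then show ?thesis by (intro exI[of _ p]) linarith
qed

end
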